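(* Let $n\le m$ and let $W\in\mathbb{R}^{n\times m}$ have full row rank $n$. Let $r\ge 1$ be an integer with $2r\le n$. Define the rank capacity of a parameterized adapter $f_\theta(W)$ by $$\mathcal{R}(f_\theta;W):=\max_{\theta}\operatorname{rank}(f_\theta(W))-\min_{\theta}\operatorname{rank}(f_\theta(W)).$$ Consider: (i) the rank-$r$ LoRA adapter $f_{\{A,B\}}(W)=W+AB^T$, where $A\in\mathbb{R}^{n\times r}$ and $B\in\mathbb{R}^{m\times r}$ range over all real matrices; (ii) the rank-$r$ additive spectral adapter: fix a singular value decomposition $W=USV^T$ with $U\in\mathbb{R}^{n\times n}$, $V\in\mathbb{R}^{m\times m}$ orthogonal and $S\in\mathbb{R}^{n\times m}$ rectangular diagonal with the singular values in nonincreasing order; write $U=[U_1\ U_2]$, $V=[V_1\ V_2]$ with $U_1\in\mathbb{R}^{n\times r}$, $V_1\in\mathbb{R}^{m\times r}$ the first $r$ columns; and set $f_{\{A_U,A_V\}}(W)=[U_1+A_U\ \ U_2]\,S\,[V_1+A_V\ \ V_2]^T$, where $A_U\in\mathbb{R}^{n\times r}$ and $A_V\in\mathbb{R}^{m\times r}$ range over all real matrices. Both adapters have $r(n+m)$ trainable parameters, and $$\mathcal{R}(\mathrm{LoRA};W)=r,\qquad \mathcal{R}(\mathrm{Spectral\ Adapter}^A;W)=2r.$$ *)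

theory Defs
  imports "Jordan_Normal_Form.DL_Rank"
begin

definition mrank :: "real mat \<Rightarrow> nat" where
  "mrank M = vec_space.rank (dim_row M) M"

definition orth_mat :: "nat \<Rightarrow> real mat \<Rightarrow> bool" where
  "orth_mat k Q \<longleftrightarrow> Q \<in> carrier_mat k k \<and> transpose_mat Q * Q = 1\<^sub>m k \<and> Q * transpose_mat Q = 1\<^sub>m k"

definition is_svd :: "nat \<Rightarrow> nat \<Rightarrow> real mat \<Rightarrow> real mat \<Rightarrow> real mat \<Rightarrow> real mat \<Rightarrow> bool" where
  "is_svd n m W U S V \<longleftrightarrow>
     orth_mat n U \<and> orth_mat m V \<and> S \<in> carrier_mat n m \<and>
     (\<forall>i<n. \<forall>j<m. i \<noteq> j \<longrightarrow> S $$ (i,j) = 0) \<and>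
     (\<forall>i<min n m. S $$ (i,i) \<ge> 0) \<and>
     (\<forall>i j. i \<le> j \<and> j < min n m \<longrightarrow> S $$ (j,j) \<le> S $$ (i,i)) \<and>
     W = U * S * transpose_mat V"

definition rank_capacity :: "'p set \<Rightarrow> ('p \<Rightarrow> real mat) \<Rightarrow> nat" where
  "rank_capacity \<Theta> f = Max ((\<lambda>\<theta>. mrank (f \<theta>)) ` \<Theta>) - Min ((\<lambda>\<theta>. mrank (f \<theta>)) ` \<Theta>)"

definition add_first_cols :: "real mat \<Rightarrow> real mat \<Rightarrow> real mat" where
  "add_first_cols U A = mat (dim_row U) (dim_col U)
     (\<lambda>(i,j). if j < dim_col A then U $$ (i,j) + A $$ (i,j) else U $$ (i,j))"

definition lora :: "real mat \<Rightarrow> real mat \<times> real mat \<Rightarrow> real mat" where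
  "lora W AB = W + fst AB * transpose_mat (snd AB)"

definition spectral_adapter :: "real mat \<Rightarrow> real mat \<Rightarrow> real mat \<Rightarrow> real mat \<times> real mat \<Rightarrow> real mat" where
  "spectral_adapter U S V AA =
     add_first_cols U (fst AA) * S * transpose_mat (add_first_cols V (snd AA))"

definition param_space :: "nat \<Rightarrow> nat \<Rightarrow> nat \<Rightarrow> (real mat \<times> real mat) set" where
  "param_space n m r = {(A, B). A \<in> carrier_mat n r \<and> B \<in> carrier_mat m r}"

end

theory Submission
  imports Defs
begin

text \<open>Both adapters move \<open>W\<close> by a matrix of small rank. For LoRA this is \<open>A B\<^sup>T\<close>, of rank at most \<open>r\<close>;
  writing \<open>[U\<^sub>1 + A\<^sub>U  U\<^sub>2] = U + A\<^sub>U P\<close> and \<open>[V\<^sub>1 + A\<^sub>V  V\<^sub>2] = V + A\<^sub>V Q\<close> with \<open>P, Q\<close> the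
  \<open>r\<close>-row truncated identities, the spectral adapter differs from \<open>U S V\<^sup>T\<close> by two products that each factor
  through \<open>r\<close> dimensions. Subadditivity of rank therefore confines the rank of the adapted matrix to
  \<open>[n - r, n]\<close>, resp. \<open>[n - 2r, n]\<close>, and zero parameters give rank \<open>n\<close>. Both lower bounds are attained:
  LoRA can subtract the \<open>r\<close> leading singular terms \<open>s\<^sub>j u\<^sub>j v\<^sub>j\<^sup>T\<close>, while the spectral adapter can turn
  \<open>u\<^sub>j, v\<^sub>j\<close> (\<open>j < r\<close>) into \<open>u\<^sub>j\<^sub>+\<^sub>r, -(s\<^sub>j\<^sub>+\<^sub>r / s\<^sub>j) v\<^sub>j\<^sub>+\<^sub>r\<close>, so that these terms cancel the singular
  terms \<open>r \<le> j < 2r\<close> and only \<open>n - 2r\<close> of them remain.\<close>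

lemma (in vec_space) mult_mat_vec_in_span_cols:
  assumes A: "A \<in> carrier_mat n k" and v: "v \<in> carrier_vec k"
  shows "A *\<^sub>v v \<in> span (set (cols A))"
proof -
  have cols: "set (cols A) \<subseteq> carrier_vec n" using A cols_dim by (metis carrier_matD(1))
  have "lincomb_list (\<lambda>i. v $ i) (cols A) = mat_of_cols n (cols A) *\<^sub>v vec (length (cols A)) (\<lambda>i. v $ i)"
    by (rule lincomb_list_as_mat_mult) (use cols in auto)
  also have "mat_of_cols n (cols A) = A" using A mat_of_cols_cols[of A] by auto
  also have "vec (length (cols A)) (\<lambda>i. v $ i) = v" using A v by (intro eq_vecI) auto
  finally have "A *\<^sub>v v \<in> span_list (cols A)"
    unfolding span_list_def by (metis (mono_tags, lifting) mem_Collect_eq)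
  then show ?thesis using span_list_as_span[OF cols] by simp
qed

lemma (in vec_space) rank_le_rank_if_cols_in_span:
  assumes A: "A \<in> carrier_mat n ka" and B: "B \<in> carrier_mat n kb"
    and sub: "set (cols A) \<subseteq> span (set (cols B))"
  shows "rank A \<le> rank B"
proof -
  have sB: "subspace class_ring (span (set (cols B))) V"
    using B cols_dim span_is_subspace by (metis carrier_matD(1))
  have sA: "subspace class_ring (span (set (cols A))) V"
    using A cols_dim span_is_subspace by (metis carrier_matD(1))
  have "span (set (cols A)) \<subseteq> span (set (cols B))"
    using sub by (simp add: span_is_subset sB[unfolded subspace_def])
  then have "subspace class_ring (span (set (cols A))) (vs (span (set (cols B))))"
    using nested_subspaces[OF sB sA] by blast
  then show ?thesis unfolding rank_def
    using vectorspace.subspace_dim[OF subspace_is_vs[OF sB]] fin_dim_span_cols[OF A] fin_dim_span_cols[OF B]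
    by auto
qed

lemma (in vec_space) rank_mult_le_left:
  assumes A: "A \<in> carrier_mat n k" and B: "B \<in> carrier_mat k l"
  shows "rank (A * B) \<le> rank A"
proof (rule rank_le_rank_if_cols_in_span[OF _ A])
  show "A * B \<in> carrier_mat n l" using A B by auto
  show "set (cols (A * B)) \<subseteq> span (set (cols A))"
  proof
    fix x assume "x \<in> set (cols (A * B))"
    then obtain j where "j < l" "x = col (A * B) j" using A B
      by (metis cols_length cols_nth in_set_conv_nth carrier_matD(2) index_mult_mat(3))
    then show "x \<in> span (set (cols A))"
      using mult_mat_vec_in_span_cols[OF A] A B by (simp add: mult_mat_vec_def)
  qed
qed

lemma (in vec_space) rank_le_dim_row:
  assumes A: "A \<in> carrier_mat n k"
  shows "rank A \<le> n"
proof -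
  have "subspace class_ring (span (set (cols A))) V"
    using A cols_dim span_is_subspace by (metis carrier_matD(1))
  then show ?thesis unfolding rank_def
    using subspace_dim[OF _ fin_dim] fin_dim_span_cols[OF A] dim_is_n by auto
qed

lemma mrank_mult_le_left:
  "A \<in> carrier_mat n k \<Longrightarrow> B \<in> carrier_mat k l \<Longrightarrow> mrank (A * B) \<le> mrank A"
  unfolding mrank_def using vec_space.rank_mult_le_left by simp

lemma mrank_le_dim_col: "A \<in> carrier_mat n k \<Longrightarrow> mrank A \<le> k"
  unfolding mrank_def using vec_space.rank_le_nc by simp

lemma mrank_le_dim_row: "A \<in> carrier_mat n k \<Longrightarrow> mrank A \<le> n"
  unfolding mrank_def using vec_space.rank_le_dim_row by simp

lemma mrank_mult_le_inner_dim:
  "A \<in> carrier_mat n k \<Longrightarrow> B \<in> carrier_mat k l \<Longrightarrow> mrank (A * B) \<le> k"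
  using mrank_mult_le_left mrank_le_dim_col le_trans by blast

lemma mrank_add_le:
  "A \<in> carrier_mat n k \<Longrightarrow> B \<in> carrier_mat n k \<Longrightarrow> mrank (A + B) \<le> mrank A + mrank B"
  unfolding mrank_def using vec_space.rank_subadditive by simp

lemma mrank_uminus_le:
  assumes A: "A \<in> carrier_mat n k"
  shows "mrank (- A) \<le> mrank A"
proof -
  have "- A = A * - 1\<^sub>m k" using A by simp
  then show ?thesis using mrank_mult_le_left[OF A, of "- 1\<^sub>m k" k] by simp
qed

lemma mrank_le_mrank_add:
  assumes X: "X \<in> carrier_mat n k" and D: "D \<in> carrier_mat n k"
  shows "mrank X \<le> mrank (X + D) + mrank D"
proof -
  have "X = (X + D) + - D" using X D by (intro eq_matI) auto
  then have "mrank X \<le> mrank (X + D) + mrank (- D)"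
    using mrank_add_le[of "X + D" n k "- D"] X D by simp
  then show ?thesis using mrank_uminus_le[OF D] by simp
qed

lemma rank_capacity_eqI:
  assumes bounds: "\<And>\<theta>. \<theta> \<in> \<Theta> \<Longrightarrow> lo \<le> mrank (f \<theta>) \<and> mrank (f \<theta>) \<le> hi"
    and "\<theta>\<^sub>1 \<in> \<Theta>" "mrank (f \<theta>\<^sub>1) = hi" and "\<theta>\<^sub>2 \<in> \<Theta>" "mrank (f \<theta>\<^sub>2) = lo"
  shows "rank_capacity \<Theta> f = hi - lo"
proof -
  let ?R = "(\<lambda>\<theta>. mrank (f \<theta>)) ` \<Theta>"
  have fin: "finite ?R" by (rule finite_subset[of _ "{..hi}"]) (use bounds in auto)
  have "Max ?R = hi" by (rule Max_eqI[OF fin]) (use assms in force)+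
  moreover have "Min ?R = lo" by (rule Min_eqI[OF fin]) (use assms in force)+
  ultimately show ?thesis unfolding rank_capacity_def by simp
qed

lemma mult_mat_mat:
  "mat n k f * mat k m g = mat n m (\<lambda>(i, j). \<Sum>l<k. f (i, l) * g (l, j))"
  by (rule eq_matI) (auto simp: scalar_prod_def lessThan_atLeast0 intro!: sum.cong)

lemma transpose_mat_mat: "transpose_mat (mat n m f) = mat m n (\<lambda>(i, j). f (j, i))"
  by (rule eq_matI) auto

definition rect_diag_mat :: "nat \<Rightarrow> nat \<Rightarrow> (nat \<Rightarrow> 'a :: zero) \<Rightarrow> 'a mat" where
  "rect_diag_mat n m s = mat n m (\<lambda>(i, j). if i = j then s i else 0)"

lemma rect_diag_mat_carrier [simp]: "rect_diag_mat n m s \<in> carrier_mat n m"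
  and dim_row_rect_diag_mat [simp]: "dim_row (rect_diag_mat n m s) = n"
  and dim_col_rect_diag_mat [simp]: "dim_col (rect_diag_mat n m s) = m"
  unfolding rect_diag_mat_def by simp_all

lemma index_rect_diag_mat [simp]:
  "i < n \<Longrightarrow> j < m \<Longrightarrow> rect_diag_mat n m s $$ (i, j) = (if i = j then s i else 0)"
  unfolding rect_diag_mat_def by simp

lemma rect_diag_mat_of_diagonal:
  assumes "S \<in> carrier_mat n m" and "\<And>i j. i < n \<Longrightarrow> j < m \<Longrightarrow> i \<noteq> j \<Longrightarrow> S $$ (i, j) = 0"
  shows "S = rect_diag_mat n m (\<lambda>i. S $$ (i, i))"
  using assms by (intro eq_matI) auto

lemma rect_diag_mat_add:
  fixes s t :: "nat \<Rightarrow> 'a :: monoid_add"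
  shows "rect_diag_mat n m s + rect_diag_mat n m t = rect_diag_mat n m (\<lambda>i. s i + t i)"
  by (intro eq_matI) auto

lemma rect_diag_mat_mult_transpose:
  fixes s t :: "nat \<Rightarrow> 'a :: comm_semiring_1"
  shows "rect_diag_mat n k s * transpose_mat (rect_diag_mat m k t)
    = rect_diag_mat n m (\<lambda>i. if i < k then s i * t i else 0)"
proof -
  have entry: "(\<Sum>l<k. (if i = l then s i else 0) * (if j = l then t j else 0))
      = (if i = j then if i < k then s i * t i else 0 else 0)" for i j
    by (induction k) auto
  show ?thesis unfolding rect_diag_mat_def transpose_mat_mat mult_mat_mat
    by (intro eq_matI) (simp_all add: entry)
qed

lemma rect_diag_mat_factor:
  fixes s :: "nat \<Rightarrow> 'a :: semiring_1"
  assumes vanish: "\<And>i. i < k \<Longrightarrow> s i = 0"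
  shows "rect_diag_mat n m s
    = mat n (n - k) (\<lambda>(i, j). if i = j + k then 1 else 0) * mat (n - k) m (\<lambda>(j, l). if l = j + k then s l else 0)"
proof -
  have entry: "(\<Sum>j<n - k. (if i = j + k then 1 else 0) * (if l = j + k then s l else 0))
      = (if i = l then s i else 0)" if "i < n" for i l
  proof -
    have "(\<Sum>j<n - k. (if i = j + k then 1 else 0) * (if l = j + k then s l else 0))
        = (\<Sum>j<n - k. if j = i - k then (if i = l \<and> k \<le> i then s i else 0) else 0)"
      by (rule sum.cong) auto
    also have "\<dots> = (if i = l then s i else 0)" using that vanish by auto
    finally show ?thesis .
  qed
  show ?thesis unfolding rect_diag_mat_def mult_mat_mat by (intro eq_matI) (simp_all add: entry)
qed

lemma mrank_mult_rect_diag_mat_mult_le: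
  assumes U: "U \<in> carrier_mat p n" and V: "V \<in> carrier_mat m q"
    and vanish: "\<And>i. i < k \<Longrightarrow> s i = 0"
  shows "mrank (U * rect_diag_mat n m s * V) \<le> n - k"
proof -
  define G :: "real mat" where "G = mat n (n - k) (\<lambda>(i, j). if i = j + k then 1 else 0)"
  define H where "H = mat (n - k) m (\<lambda>(j, l). if l = j + k then s l else 0)"
  have G: "G \<in> carrier_mat n (n - k)" and H: "H \<in> carrier_mat (n - k) m"
    unfolding G_def H_def by auto
  have "rect_diag_mat n m s = G * H"
    unfolding G_def H_def by (rule rect_diag_mat_factor[OF vanish])
  then have "U * rect_diag_mat n m s * V = U * (G * H) * V" by simp
  also have "\<dots> = (U * G) * (H * V)"
    using U G H V by (simp add: assoc_mult_mat[of U p n "G * H" m V q] assoc_mult_mat[of G n "n - k" H m V q]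
        assoc_mult_mat[of U p n G "n - k" "H * V" q])
  finally show ?thesis using mrank_mult_le_inner_dim[of "U * G" p "n - k" "H * V" q] U G H V by auto
qed

definition col_select_mat :: "nat \<Rightarrow> (nat \<Rightarrow> nat) \<Rightarrow> (nat \<Rightarrow> 'a :: zero) \<Rightarrow> 'a mat" where
  "col_select_mat k \<sigma> c = mat k k (\<lambda>(i, j). if i = \<sigma> j then c j else 0)"

lemma col_select_mat_carrier [simp]: "col_select_mat k \<sigma> c \<in> carrier_mat k k"
  and dim_row_col_select_mat [simp]: "dim_row (col_select_mat k \<sigma> c) = k"
  and dim_col_col_select_mat [simp]: "dim_col (col_select_mat k \<sigma> c) = k"
  unfolding col_select_mat_def by simp_all

lemma mult_col_select_mat:
  fixes U :: "'a :: semiring_1 mat"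
  assumes U: "U \<in> carrier_mat n k" and \<sigma>: "\<And>j. j < k \<Longrightarrow> \<sigma> j < k"
  shows "U * col_select_mat k \<sigma> c = mat n k (\<lambda>(i, j). U $$ (i, \<sigma> j) * c j)"
proof (intro eq_matI)
  fix i j assume "i < dim_row (mat n k (\<lambda>(i, j). U $$ (i, \<sigma> j) * c j))"
    and "j < dim_col (mat n k (\<lambda>(i, j). U $$ (i, \<sigma> j) * c j))"
  then have ij: "i < n" "j < k" by auto
  have "(\<Sum>l<k. U $$ (i, l) * (if l = \<sigma> j then c j else 0)) = U $$ (i, \<sigma> j) * c j"
    using \<sigma>[OF ij(2)] by (simp add: if_distrib cong: if_cong)
  then show "(U * col_select_mat k \<sigma> c) $$ (i, j) = mat n k (\<lambda>(i, j). U $$ (i, \<sigma> j) * c j) $$ (i, j)"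
    using U ij by (simp add: col_select_mat_def scalar_prod_def lessThan_atLeast0)
qed (use U in auto)

lemma col_select_rect_diag_col_select:
  fixes s :: "nat \<Rightarrow> 'a :: comm_semiring_1"
  assumes "n \<le> m"
  shows "col_select_mat n \<sigma> c * rect_diag_mat n m s * transpose_mat (col_select_mat m \<sigma> d)
    = rect_diag_mat n m (\<lambda>i. \<Sum>j | j < n \<and> \<sigma> j = i. c j * s j * d j)"
proof -
  have diag: "(\<Sum>l<k. (if i = \<sigma> l then c l else 0) * (if l = j then s l else 0))
      = (if j < k \<and> i = \<sigma> j then c j * s j else 0)" for i j k
    by (induction k) auto
  have ES: "col_select_mat n \<sigma> c * rect_diag_mat n m s
      = mat n m (\<lambda>(i, j). if j < n \<and> i = \<sigma> j then c j * s j else 0)"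
    unfolding col_select_mat_def rect_diag_mat_def mult_mat_mat by (intro eq_matI) (simp_all add: diag)
  have entry: "(\<Sum>j<m. (if j < n \<and> i = \<sigma> j then c j * s j else 0) * (if l = \<sigma> j then d j else 0))
      = (if i = l then \<Sum>j | j < n \<and> \<sigma> j = i. c j * s j * d j else 0)" for i l
  proof -
    have "(\<Sum>j<m. (if j < n \<and> i = \<sigma> j then c j * s j else 0) * (if l = \<sigma> j then d j else 0))
        = (\<Sum>j<m. if j < n \<and> \<sigma> j = i then (if i = l then c j * s j * d j else 0) else 0)"
      by (rule sum.cong) auto
    also have "\<dots> = (\<Sum>j \<in> {j \<in> {..<m}. j < n \<and> \<sigma> j = i}. if i = l then c j * s j * d j else 0)"
      by (rule sum.inter_filter[symmetric]) simp
    also have "{j \<in> {..<m}. j < n \<and> \<sigma> j = i} = {j. j < n \<and> \<sigma> j = i}"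
      using assms by auto
    finally show ?thesis by (cases "i = l") simp_all
  qed
  show ?thesis unfolding ES unfolding col_select_mat_def rect_diag_mat_def transpose_mat_mat mult_mat_mat
    by (intro eq_matI) (simp_all add: entry)
qed

lemma mult_transpose_mult:
  fixes U K V L :: "'a :: comm_semiring_1 mat"
  assumes U: "U \<in> carrier_mat n p" and K: "K \<in> carrier_mat p r"
    and V: "V \<in> carrier_mat m q" and L: "L \<in> carrier_mat q r"
  shows "(U * K) * transpose_mat (V * L) = U * (K * transpose_mat L) * transpose_mat V"
proof -
  have Lt: "transpose_mat L \<in> carrier_mat r q" and Vt: "transpose_mat V \<in> carrier_mat q m"
    using L V by auto
  have "(U * K) * transpose_mat (V * L) = U * (K * (transpose_mat L * transpose_mat V))"
    using U K Lt Vt by (simp add: transpose_mult[OF V L] assoc_mult_mat[of U n p K r _ m])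
  also have "\<dots> = U * (K * transpose_mat L) * transpose_mat V"
    using U K Lt Vt by (simp add: assoc_mult_mat[of U n p "K * transpose_mat L" q _ m]
        assoc_mult_mat[of K p r _ q _ m])
  finally show ?thesis .
qed

lemma mult_mult_transpose_mult:
  fixes U E S V F :: "'a :: comm_semiring_1 mat"
  assumes U: "U \<in> carrier_mat n p" and E: "E \<in> carrier_mat p a" and S: "S \<in> carrier_mat a b"
    and V: "V \<in> carrier_mat m q" and F: "F \<in> carrier_mat q b"
  shows "(U * E) * S * transpose_mat (V * F) = U * (E * S * transpose_mat F) * transpose_mat V"
  using mult_transpose_mult[OF U _ V F, of "E * S"] U E S by simp

lemma mult_add_mult_distrib:
  fixes U X Y V :: "'a :: semiring_0 mat"
  assumes "U \<in> carrier_mat n p" "X \<in> carrier_mat p q" "Y \<in> carrier_mat p q" "V \<in> carrier_mat q m"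
  shows "U * (X + Y) * V = U * X * V + U * Y * V"
  using assms by (simp add: mult_add_distrib_mat[of U n p] add_mult_distrib_mat[of _ n q])

lemma lora_carrier:
  "W \<in> carrier_mat n m \<Longrightarrow> A \<in> carrier_mat n r \<Longrightarrow> B \<in> carrier_mat m r \<Longrightarrow> lora W (A, B) \<in> carrier_mat n m"
  unfolding lora_def by auto

lemma mrank_le_mrank_lora:
  assumes W: "W \<in> carrier_mat n m" and A: "A \<in> carrier_mat n r" and B: "B \<in> carrier_mat m r"
  shows "mrank W \<le> mrank (lora W (A, B)) + r"
proof -
  have AB: "A * transpose_mat B \<in> carrier_mat n m" using A B by auto
  have "mrank (A * transpose_mat B) \<le> r"
    using mrank_mult_le_inner_dim[OF A, of "transpose_mat B" m] B by simp
  then show ?thesis using mrank_le_mrank_add[OF W AB] unfolding lora_def by simp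
qed

lemma exists_lora_mrank_le:
  fixes U V :: "real mat"
  assumes U: "U \<in> carrier_mat n n" and V: "V \<in> carrier_mat m m"
  shows "\<exists>A B. A \<in> carrier_mat n r \<and> B \<in> carrier_mat m r
    \<and> mrank (lora (U * rect_diag_mat n m s * transpose_mat V) (A, B)) \<le> n - r"
proof (intro exI conjI)
  let ?A = "U * rect_diag_mat n r (\<lambda>j. - s j)" and ?B = "V * rect_diag_mat m r (\<lambda>_. 1)"
  show "?A \<in> carrier_mat n r" "?B \<in> carrier_mat m r" using U V by auto
  have low_rank_part: "rect_diag_mat n r (\<lambda>j. - s j) * transpose_mat (rect_diag_mat m r (\<lambda>_. 1))
      = rect_diag_mat n m (\<lambda>i. if i < r then - s i else 0)"
    by (simp add: rect_diag_mat_mult_transpose cong: if_cong)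
  have truncate: "rect_diag_mat n m s + rect_diag_mat n m (\<lambda>i. if i < r then - s i else 0)
      = rect_diag_mat n m (\<lambda>i. if i < r then 0 else s i)"
    unfolding rect_diag_mat_add by (rule arg_cong[where f = "rect_diag_mat n m"]) auto
  have "lora (U * rect_diag_mat n m s * transpose_mat V) (?A, ?B) = U * rect_diag_mat n m s * transpose_mat V
      + U * rect_diag_mat n m (\<lambda>i. if i < r then - s i else 0) * transpose_mat V"
    unfolding lora_def fst_conv snd_conv low_rank_part[symmetric]
    using mult_transpose_mult[OF U _ V, of "rect_diag_mat n r (\<lambda>j. - s j)" r] by simp
  also have "\<dots> = U * rect_diag_mat n m (\<lambda>i. if i < r then 0 else s i) * transpose_mat V"
    unfolding truncate[symmetric]
    using mult_add_mult_distrib[OF U rect_diag_mat_carrier rect_diag_mat_carrier, of "transpose_mat V" m] V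
    by simp
  finally show "mrank (lora (U * rect_diag_mat n m s * transpose_mat V) (?A, ?B)) \<le> n - r"
    using mrank_mult_rect_diag_mat_mult_le[OF U, of "transpose_mat V" m m r] V by simp
qed

lemma rank_capacity_lora:
  fixes U V :: "real mat"
  assumes U: "U \<in> carrier_mat n n" and V: "V \<in> carrier_mat m m"
    and W: "W = U * rect_diag_mat n m s * transpose_mat V" and full: "mrank W = n" and "r \<le> n"
  shows "rank_capacity (param_space n m r) (lora W) = r"
proof -
  have Wc: "W \<in> carrier_mat n m" using U V W by auto
  obtain A B where A: "A \<in> carrier_mat n r" and B: "B \<in> carrier_mat m r"
    and "mrank (lora W (A, B)) \<le> n - r"
    using exists_lora_mrank_le[OF U V, of r s] unfolding W by blast
  then have low: "mrank (lora W (A, B)) = n - r"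
    using mrank_le_mrank_lora[OF Wc A B] full by simp
  have zero: "lora W (0\<^sub>m n r, 0\<^sub>m m r) = W" unfolding lora_def using Wc by (intro eq_matI) auto
  have "rank_capacity (param_space n m r) (lora W) = n - (n - r)"
  proof (rule rank_capacity_eqI[where \<theta>\<^sub>1 = "(0\<^sub>m n r, 0\<^sub>m m r)" and \<theta>\<^sub>2 = "(A, B)"])
    fix \<theta> assume "\<theta> \<in> param_space n m r"
    then obtain A' B' where \<theta>: "\<theta> = (A', B')" and A': "A' \<in> carrier_mat n r" and B': "B' \<in> carrier_mat m r"
      unfolding param_space_def by auto
    show "n - r \<le> mrank (lora W \<theta>) \<and> mrank (lora W \<theta>) \<le> n"
      using mrank_le_mrank_lora[OF Wc A' B'] mrank_le_dim_row[OF lora_carrier[OF Wc A' B']] full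
      unfolding \<theta> by linarith
  qed (use zero full low A B in \<open>simp_all add: param_space_def\<close>)
  then show ?thesis using \<open>r \<le> n\<close> by simp
qed

lemma add_first_cols_carrier: "U \<in> carrier_mat n k \<Longrightarrow> add_first_cols U A \<in> carrier_mat n k"
  unfolding add_first_cols_def by auto

lemma add_first_cols_zero_mat: "U \<in> carrier_mat n k \<Longrightarrow> add_first_cols U (0\<^sub>m n r) = U"
  unfolding add_first_cols_def by (intro eq_matI) auto

lemma add_first_cols_eq_add_mult:
  assumes U: "U \<in> carrier_mat n k" and A: "A \<in> carrier_mat n r" and "r \<le> k"
  shows "add_first_cols U A = U + A * rect_diag_mat r k (\<lambda>_. 1)"
proof (intro eq_matI)
  fix i j assume "i < dim_row (U + A * rect_diag_mat r k (\<lambda>_. 1))" "j < dim_col (U + A * rect_diag_mat r k (\<lambda>_. 1))"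
  then have ij: "i < n" "j < k" using U A by auto
  have "(\<Sum>l<r. A $$ (i, l) * (if l = j then 1 else 0)) = (if j < r then A $$ (i, j) else 0)"
    by (simp add: if_distrib cong: if_cong)
  then show "add_first_cols U A $$ (i, j) = (U + A * rect_diag_mat r k (\<lambda>_. 1)) $$ (i, j)"
    using U A ij \<open>r \<le> k\<close> by (simp add: add_first_cols_def scalar_prod_def lessThan_atLeast0)
qed (use U A in \<open>auto simp: add_first_cols_def\<close>)

lemma add_first_cols_eq_mult_col_select_mat:
  assumes U: "U \<in> carrier_mat n k" and "r \<le> k" and \<sigma>: "\<And>j. j < k \<Longrightarrow> \<sigma> j < k"
    and fixed: "\<And>j. r \<le> j \<Longrightarrow> \<sigma> j = j \<and> c j = 1"
  shows "add_first_cols U (mat n r (\<lambda>(i, j). U $$ (i, \<sigma> j) * c j - U $$ (i, j))) = U * col_select_mat k \<sigma> c"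
proof -
  have "U * col_select_mat k \<sigma> c = mat n k (\<lambda>(i, j). U $$ (i, \<sigma> j) * c j)"
    by (rule mult_col_select_mat[OF U \<sigma>])
  then show ?thesis unfolding add_first_cols_def using U \<open>r \<le> k\<close> fixed by (intro eq_matI) auto
qed

lemma spectral_adapter_carrier:
  "U \<in> carrier_mat n n \<Longrightarrow> S \<in> carrier_mat n m \<Longrightarrow> V \<in> carrier_mat m m
    \<Longrightarrow> spectral_adapter U S V \<theta> \<in> carrier_mat n m"
  unfolding spectral_adapter_def using add_first_cols_carrier[of V m m] add_first_cols_carrier[of U n n]
  by (metis mult_carrier_mat transpose_carrier_mat)

lemma add_mult_transpose_add_mult:
  fixes U A P S V B Q :: "'a :: comm_semiring_1 mat"
  assumes U: "U \<in> carrier_mat n n" and A: "A \<in> carrier_mat n r" and P: "P \<in> carrier_mat r n"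
    and S: "S \<in> carrier_mat n m" and V: "V \<in> carrier_mat m m" and B: "B \<in> carrier_mat m r"
    and Q: "Q \<in> carrier_mat r m"
  shows "(U + A * P) * S * transpose_mat (V + B * Q)
    = U * S * transpose_mat V + ((U * S * transpose_mat Q) * transpose_mat B + A * (P * S * transpose_mat (V + B * Q)))"
proof -
  define Y where "Y = transpose_mat (V + B * Q)"
  have Y: "Y \<in> carrier_mat m m" unfolding Y_def using V B Q by auto
  have Vt: "transpose_mat V \<in> carrier_mat m m" and Qt: "transpose_mat Q \<in> carrier_mat m r"
    and Bt: "transpose_mat B \<in> carrier_mat r m" using V Q B by auto
  have US: "U * S \<in> carrier_mat n m" and PS: "P * S \<in> carrier_mat r m" using U P S by auto
  have "(U + A * P) * S * Y = U * S * Y + A * (P * S * Y)"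
    using U A P S Y by (simp add: add_mult_distrib_mat[of U n n] add_mult_distrib_mat[of "U * S" n m]
        assoc_mult_mat[of A n r P n] assoc_mult_mat[of A n r "P * S" m Y m] assoc_mult_mat[of P r n S m Y m])
  also have "U * S * Y = U * S * transpose_mat V + (U * S * transpose_mat Q) * transpose_mat B"
    unfolding Y_def using V B Q US Vt Qt Bt
    by (simp add: transpose_add[of V m m] transpose_mult[OF B Q] mult_add_distrib_mat[OF US])
  finally show ?thesis unfolding Y_def using US Vt Qt Bt A PS Y[unfolded Y_def]
    by (simp add: assoc_add_mat[of _ n m])
qed

lemma mrank_le_mrank_spectral_adapter:
  fixes U S V :: "real mat"
  assumes U: "U \<in> carrier_mat n n" and S: "S \<in> carrier_mat n m" and V: "V \<in> carrier_mat m m"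
    and A: "A \<in> carrier_mat n r" and B: "B \<in> carrier_mat m r" and "r \<le> n" "r \<le> m"
  shows "mrank (U * S * transpose_mat V) \<le> mrank (spectral_adapter U S V (A, B)) + 2 * r"
proof -
  define P :: "real mat" where "P = rect_diag_mat r n (\<lambda>_. 1)"
  define Q :: "real mat" where "Q = rect_diag_mat r m (\<lambda>_. 1)"
  define D1 where "D1 = (U * S * transpose_mat Q) * transpose_mat B"
  define D2 where "D2 = A * (P * S * transpose_mat (V + B * Q))"
  have P: "P \<in> carrier_mat r n" and Q: "Q \<in> carrier_mat r m" unfolding P_def Q_def by auto
  have D1: "D1 \<in> carrier_mat n m" and mD1: "mrank D1 \<le> r"
    unfolding D1_def using mrank_mult_le_inner_dim[of "U * S * transpose_mat Q" n r "transpose_mat B" m] U S Q B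
    by auto
  have "transpose_mat (V + B * Q) \<in> carrier_mat m m" using V B Q by auto
  then have PSY: "P * S * transpose_mat (V + B * Q) \<in> carrier_mat r m" using P S by auto
  have D2: "D2 \<in> carrier_mat n m" and mD2: "mrank D2 \<le> r"
    unfolding D2_def using mrank_mult_le_inner_dim[OF A PSY] A PSY by auto
  have "spectral_adapter U S V (A, B) = U * S * transpose_mat V + (D1 + D2)"
    unfolding spectral_adapter_def fst_conv snd_conv D1_def D2_def P_def Q_def
      add_first_cols_eq_add_mult[OF U A \<open>r \<le> n\<close>] add_first_cols_eq_add_mult[OF V B \<open>r \<le> m\<close>]
    using add_mult_transpose_add_mult[OF U A _ S V B, of "rect_diag_mat r n (\<lambda>_. 1)" "rect_diag_mat r m (\<lambda>_. 1)"]
      \<open>r \<le> n\<close> \<open>r \<le> m\<close> by simp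
  then show ?thesis
    using mrank_le_mrank_add[of "U * S * transpose_mat V" n m "D1 + D2"] mrank_add_le[OF D1 D2]
      mD1 mD2 U S V D1 D2 by simp
qed

lemma spectral_adapter_shift_cols:
  fixes U V :: "real mat"
  assumes U: "U \<in> carrier_mat n n" and V: "V \<in> carrier_mat m m" and "r \<le> n" "n \<le> m"
    and \<sigma>_n: "\<And>j. j < n \<Longrightarrow> \<sigma> j < n" and \<sigma>_m: "\<And>j. j < m \<Longrightarrow> \<sigma> j < m"
    and fixed: "\<And>j. r \<le> j \<Longrightarrow> \<sigma> j = j \<and> a j = 1 \<and> c j = 1"
  shows "spectral_adapter U (rect_diag_mat n m s) V
      (mat n r (\<lambda>(i, j). U $$ (i, \<sigma> j) * a j - U $$ (i, j)), mat m r (\<lambda>(i, j). V $$ (i, \<sigma> j) * c j - V $$ (i, j)))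
    = U * rect_diag_mat n m (\<lambda>i. \<Sum>j | j < n \<and> \<sigma> j = i. a j * s j * c j) * transpose_mat V"
proof -
  let ?S = "rect_diag_mat n m s"
  have fixed_a: "\<And>j. r \<le> j \<Longrightarrow> \<sigma> j = j \<and> a j = 1" and fixed_c: "\<And>j. r \<le> j \<Longrightarrow> \<sigma> j = j \<and> c j = 1"
    using fixed by simp_all
  have "add_first_cols U (mat n r (\<lambda>(i, j). U $$ (i, \<sigma> j) * a j - U $$ (i, j))) = U * col_select_mat n \<sigma> a"
    by (rule add_first_cols_eq_mult_col_select_mat[OF U \<open>r \<le> n\<close> \<sigma>_n fixed_a])
  moreover have "add_first_cols V (mat m r (\<lambda>(i, j). V $$ (i, \<sigma> j) * c j - V $$ (i, j))) = V * col_select_mat m \<sigma> c"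
    by (rule add_first_cols_eq_mult_col_select_mat[OF V order_trans[OF \<open>r \<le> n\<close> \<open>n \<le> m\<close>] \<sigma>_m fixed_c])
  ultimately have "spectral_adapter U ?S V
      (mat n r (\<lambda>(i, j). U $$ (i, \<sigma> j) * a j - U $$ (i, j)), mat m r (\<lambda>(i, j). V $$ (i, \<sigma> j) * c j - V $$ (i, j)))
      = (U * col_select_mat n \<sigma> a) * ?S * transpose_mat (V * col_select_mat m \<sigma> c)"
    unfolding spectral_adapter_def by simp
  also have "\<dots> = U * (col_select_mat n \<sigma> a * ?S * transpose_mat (col_select_mat m \<sigma> c)) * transpose_mat V"
    by (rule mult_mult_transpose_mult[OF U col_select_mat_carrier rect_diag_mat_carrier V col_select_mat_carrier])
  finally show ?thesis unfolding col_select_rect_diag_col_select[OF \<open>n \<le> m\<close>] .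
qed

lemma exists_spectral_adapter_mrank_le:
  fixes U V :: "real mat"
  assumes U: "U \<in> carrier_mat n n" and V: "V \<in> carrier_mat m m" and "2 * r \<le> n" "n \<le> m"
    and nonneg: "\<And>i. i < n \<Longrightarrow> 0 \<le> s i"
    and antimono: "\<And>i j. i \<le> j \<Longrightarrow> j < n \<Longrightarrow> s j \<le> s i"
  shows "\<exists>AU AV. AU \<in> carrier_mat n r \<and> AV \<in> carrier_mat m r
    \<and> mrank (spectral_adapter U (rect_diag_mat n m s) V (AU, AV)) \<le> n - 2 * r"
proof -
  define \<sigma> where "\<sigma> j = (if j < r then j + r else j)" for j
  define c where "c j = (if j < r then - s (j + r) / s j else 1)" for j
  define AU where "AU = mat n r (\<lambda>(i, j). U $$ (i, \<sigma> j) * 1 - U $$ (i, j))"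
  define AV where "AV = mat m r (\<lambda>(i, j). V $$ (i, \<sigma> j) * c j - V $$ (i, j))"
  have AU: "AU \<in> carrier_mat n r" and AV: "AV \<in> carrier_mat m r" unfolding AU_def AV_def by auto
  \<comment> \<open>If \<open>s j = 0\<close> then \<open>c j = 0\<close> (division by zero), which is harmless: the singular values are
    nonincreasing and nonnegative, so \<open>s (j + r) = 0\<close> as well.\<close>
  have cancel: "s j * c j = - s (j + r)" if "j < r" for j
  proof (cases "s j = 0")
    case True
    then show ?thesis using nonneg[of "j + r"] antimono[of j "j + r"] that \<open>2 * r \<le> n\<close>
      by (simp add: c_def)
  qed (simp add: c_def that)
  have vanish: "(\<Sum>j | j < n \<and> \<sigma> j = i. 1 * s j * c j) = 0" if "i < 2 * r" for i
  proof (cases "i < r")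
    case True
    then have empty: "{j. j < n \<and> \<sigma> j = i} = {}" by (auto simp: \<sigma>_def)
    show ?thesis unfolding empty by simp
  next
    case False
    then have pair: "{j. j < n \<and> \<sigma> j = i} = {i - r, i}" using that \<open>2 * r \<le> n\<close> by (auto simp: \<sigma>_def)
    have "c i = 1" using False by (simp add: c_def)
    moreover have "s (i - r) * c (i - r) = - s i" using cancel[of "i - r"] False that by simp
    moreover have "i - r \<noteq> i" using that False by auto
    ultimately show ?thesis unfolding pair by simp
  qed
  have "spectral_adapter U (rect_diag_mat n m s) V (AU, AV)
      = U * rect_diag_mat n m (\<lambda>i. \<Sum>j | j < n \<and> \<sigma> j = i. 1 * s j * c j) * transpose_mat V"
    unfolding AU_def AV_def
    by (rule spectral_adapter_shift_cols[OF U V _ \<open>n \<le> m\<close>]) (use \<open>2 * r \<le> n\<close> \<open>n \<le> m\<close> in \<open>auto simp: \<sigma>_def c_def\<close>)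
  then have "mrank (spectral_adapter U (rect_diag_mat n m s) V (AU, AV)) \<le> n - 2 * r"
    using mrank_mult_rect_diag_mat_mult_le[OF U, of "transpose_mat V" m m "2 * r"] V vanish by simp
  then show ?thesis using AU AV by blast
qed

lemma rank_capacity_spectral_adapter:
  fixes U V :: "real mat"
  assumes U: "U \<in> carrier_mat n n" and V: "V \<in> carrier_mat m m" and "2 * r \<le> n" "n \<le> m"
    and full: "mrank (U * rect_diag_mat n m s * transpose_mat V) = n"
    and nonneg: "\<And>i. i < n \<Longrightarrow> 0 \<le> s i"
    and antimono: "\<And>i j. i \<le> j \<Longrightarrow> j < n \<Longrightarrow> s j \<le> s i"
  shows "rank_capacity (param_space n m r) (spectral_adapter U (rect_diag_mat n m s) V) = 2 * r"
proof -
  let ?S = "rect_diag_mat n m s"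
  have "r \<le> n" "r \<le> m" using \<open>2 * r \<le> n\<close> \<open>n \<le> m\<close> by simp_all
  obtain AU AV where AU: "AU \<in> carrier_mat n r" and AV: "AV \<in> carrier_mat m r"
    and "mrank (spectral_adapter U ?S V (AU, AV)) \<le> n - 2 * r"
    using exists_spectral_adapter_mrank_le[where s = s, OF U V \<open>2 * r \<le> n\<close> \<open>n \<le> m\<close> nonneg antimono]
    by blast
  then have low: "mrank (spectral_adapter U ?S V (AU, AV)) = n - 2 * r"
    using mrank_le_mrank_spectral_adapter[OF U rect_diag_mat_carrier[of n m s] V AU AV \<open>r \<le> n\<close> \<open>r \<le> m\<close>]
      full by linarith
  have zero: "spectral_adapter U ?S V (0\<^sub>m n r, 0\<^sub>m m r) = U * ?S * transpose_mat V"
    unfolding spectral_adapter_def using add_first_cols_zero_mat[OF U] add_first_cols_zero_mat[OF V] by simp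
  have "rank_capacity (param_space n m r) (spectral_adapter U ?S V) = n - (n - 2 * r)"
  proof (rule rank_capacity_eqI[where \<theta>\<^sub>1 = "(0\<^sub>m n r, 0\<^sub>m m r)" and \<theta>\<^sub>2 = "(AU, AV)"])
    fix \<theta> assume "\<theta> \<in> param_space n m r"
    then obtain A B where \<theta>: "\<theta> = (A, B)" and A: "A \<in> carrier_mat n r" and B: "B \<in> carrier_mat m r"
      unfolding param_space_def by auto
    have "mrank (U * ?S * transpose_mat V) \<le> mrank (spectral_adapter U ?S V (A, B)) + 2 * r"
      by (rule mrank_le_mrank_spectral_adapter[OF U rect_diag_mat_carrier V A B \<open>r \<le> n\<close> \<open>r \<le> m\<close>])
    moreover have "mrank (spectral_adapter U ?S V (A, B)) \<le> n"
      by (rule mrank_le_dim_row[OF spectral_adapter_carrier[OF U rect_diag_mat_carrier V]])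
    ultimately show "n - 2 * r \<le> mrank (spectral_adapter U ?S V \<theta>) \<and> mrank (spectral_adapter U ?S V \<theta>) \<le> n"
      using full unfolding \<theta> by linarith
  qed (use zero full low AU AV in \<open>simp_all add: param_space_def\<close>)
  then show ?thesis using \<open>2 * r \<le> n\<close> by simp
qed

theorem lemma3p1:
  fixes n m r :: nat and W U S V :: "real mat"
  assumes "n \<le> m"
    and "W \<in> carrier_mat n m"
    and "mrank W = n"
    and "r \<ge> 1" and "2 * r \<le> n"
    and "is_svd n m W U S V"
  shows "rank_capacity (param_space n m r) (lora W) = r
       \<and> rank_capacity (param_space n m r) (spectral_adapter U S V) = 2 * r"
proof -
  have U: "U \<in> carrier_mat n n" and V: "V \<in> carrier_mat m m" and S: "S \<in> carrier_mat n m"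
    and off_diag: "\<And>i j. i < n \<Longrightarrow> j < m \<Longrightarrow> i \<noteq> j \<Longrightarrow> S $$ (i, j) = 0"
    and nonneg: "\<And>i. i < n \<Longrightarrow> 0 \<le> S $$ (i, i)"
    and antimono: "\<And>i j. i \<le> j \<Longrightarrow> j < n \<Longrightarrow> S $$ (j, j) \<le> S $$ (i, i)"
    and W: "W = U * S * transpose_mat V"
    using assms(1,6) unfolding is_svd_def orth_mat_def by (auto simp: min_absorb1)
  define s where "s = (\<lambda>i. S $$ (i, i))"
  have S_diag: "S = rect_diag_mat n m s"
    unfolding s_def by (rule rect_diag_mat_of_diagonal[OF S off_diag])
  have W_diag: "W = U * rect_diag_mat n m s * transpose_mat V" using W S_diag by simp
  have "rank_capacity (param_space n m r) (lora W) = r"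
    using rank_capacity_lora[OF U V W_diag assms(3)] assms(5) by simp
  moreover have "rank_capacity (param_space n m r) (spectral_adapter U (rect_diag_mat n m s) V) = 2 * r"
    by (rule rank_capacity_spectral_adapter[OF U V assms(5,1)])
      (use W_diag assms(3) nonneg antimono in \<open>simp_all add: s_def\<close>)
  then have "rank_capacity (param_space n m r) (spectral_adapter U S V) = 2 * r"
    using S_diag by simp
  ultimately show ?thesis ..
qed

end
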